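(* Let $q,N_x,N_T,m\ge 1$ be integers and let $\Phi,\Phi_c\in\mathbb{C}^{qN_x\times qN_x}$. Assume there is a unitary matrix $F\in\mathbb{C}^{qN_x\times qN_x}$ such that $F^{-1}\Phi F=\mathrm{diag}(\widetilde\Phi_1,\dots,\widetilde\Phi_{N_x})$ and $F^{-1}\Phi_c F=\mathrm{diag}(\widetilde\Phi_{c,1},\dots,\widetilde\Phi_{c,N_x})$ are block diagonal with blocks $\widetilde\Phi_n,\widetilde\Phi_{c,n}\in\mathbb{C}^{q\times q}$. Assume further that for every $n=1,\dots,N_x$ there is an invertible $U_n\in\mathbb{C}^{q\times q}$ with $U_n^{-1}\widetilde\Phi_nU_n=\mathrm{diag}(\lambda_{n,1},\dots,\lambda_{n,q})$ and $U_n^{-1}\widetilde\Phi_{c,n}U_n=\mathrm{diag}(\mu_{n,1},\dots,\mu_{n,q})$, and that $|\mu_{n,l}|\neq 1$ for all $n,l$. Then the coarse-grid iteration matrices $E_\Delta^F=I-A_c^{-1}A_S$ and $E_\Delta^{FCF}=(I-A_c^{-1}A_S)(I-A_S)$ satisfy $$\|E_\Delta^F\|_2\le \max_{1\le n\le N_x}\Big\{\kappa(U_n)\max_{1\le l\le q}\Big\{|\lambda_{n,l}^m-\mu_{n,l}|\,\frac{1-|\mu_{n,l}|^{N_T}}{1-|\mu_{n,l}|}\Big\}\Big\}$$ and $$\|E_\Delta^{FCF}\|_2\le \max_{1\le n\le N_x}\Big\{\kappa(U_n)\max_{1\le l\le q}\Big\{|\lambda_{n,l}^m-\mu_{n,l}|\,|\lambda_{n,l}|^m\,\frac{1-|\mu_{n,l}|^{N_T-1}}{1-|\mu_{n,l}|}\Big\}\Big\},$$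 where $\kappa(U_n)=\|U_n\|_2\|U_n^{-1}\|_2$.
   Context: For a square matrix $G$, write $\mathcal{B}_{N_T}(G)$ for the $(N_T+1)\times(N_T+1)$ block matrix (block rows/columns indexed $0,\dots,N_T$) with identity blocks on the diagonal, $-G$ on the first block subdiagonal, and zero elsewhere. The coarse-grid operator is $A_c=\mathcal{B}_{N_T}(\Phi_c)$ and the Schur-complement coarse-grid operator is $A_S=\mathcal{B}_{N_T}(\Phi^m)$; $I$ denotes the identity of the same size. $\|\cdot\|_2$ is the spectral norm. *)

theory Defs
  imports Complex_Main "Jordan_Normal_Form.Matrix"
begin

definition vnorm2 :: "complex vec \<Rightarrow> real" where
  "vnorm2 v = sqrt (\<Sum>i<dim_vec v. (cmod (v $ i))^2)"

definition spec_norm :: "complex mat \<Rightarrow> real" where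
  "spec_norm A = Sup {vnorm2 (A *\<^sub>v v) | v. v \<in> carrier_vec (dim_col A) \<and> vnorm2 v \<le> 1}"

definition adj :: "complex mat \<Rightarrow> complex mat" where
  "adj A = mat (dim_col A) (dim_row A) (\<lambda>(i,j). cnj (A $$ (j,i)))"

definition minv :: "complex mat \<Rightarrow> complex mat" where
  "minv A = (SOME B. B \<in> carrier_mat (dim_row A) (dim_row A) \<and>
                    A * B = 1\<^sub>m (dim_row A) \<and> B * A = 1\<^sub>m (dim_row A))"

definition kappa :: "complex mat \<Rightarrow> real" where
  "kappa U = spec_norm U * spec_norm (minv U)"

definition block_diag :: "nat \<Rightarrow> nat \<Rightarrow> (nat \<Rightarrow> complex mat) \<Rightarrow> complex mat" where
  "block_diag q N B = mat (q*N) (q*N)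
     (\<lambda>(i,j). if i div q = j div q then B (i div q) $$ (i mod q, j mod q) else 0)"

(* B_{N_T}(G): (N_T+1) x (N_T+1) block matrix, identity on the diagonal,
   -G on the first block subdiagonal, zero elsewhere *)
definition block_bidiag :: "nat \<Rightarrow> complex mat \<Rightarrow> complex mat" where
  "block_bidiag NT G = (let d = dim_row G in mat ((NT+1)*d) ((NT+1)*d)
     (\<lambda>(i,j). if i div d = j div d then (if i mod d = j mod d then 1 else 0)
              else if i div d = j div d + 1 then - (G $$ (i mod d, j mod d))
              else 0))"

end

theory Submission
  imports Defs "Jordan_Normal_Form.Determinant"
begin

(* Split a space-time vector into its time blocks v_0, ..., v_NT. Then e = (I - A_c^-1 A_S) v
   solves the coarse time-stepping recursion e_0 = 0, e_(t+1) = Phi_c e_t + (Phi^m - Phi_c) v_t,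
   and for the FCF operator the same recursion holds with input (Phi^m - Phi_c) Phi^m v_t, one step
   late. Conjugation by the unitary F (an isometry) and then by the U_n decouples it into scalar
   recursions z_(t+1) = mu z_t + h xi_t, whose solution is the convolution of xi with the kernel
   h mu^k; Young's inequality bounds its energy by (|h| sum_(k<N) |mu|^k)^2 times that of xi.
   Undoing the U_n costs the factor kappa(U_n). *)

section \<open>Euclidean and spectral norms\<close>

definition vnorm_sq :: "complex vec \<Rightarrow> real" where
  "vnorm_sq v = (\<Sum>i<dim_vec v. (cmod (v $ i))^2)"

lemma vnorm_sq_nonneg: "0 \<le> vnorm_sq v"
  unfolding vnorm_sq_def by (simp add: sum_nonneg)

lemma vnorm2_eq_sqrt: "vnorm2 v = sqrt (vnorm_sq v)"
  unfolding vnorm2_def vnorm_sq_def by simp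

lemma vnorm_sq_zero_vec [simp]: "vnorm_sq (0\<^sub>v n) = 0"
  unfolding vnorm_sq_def by simp

lemma vnorm_sq_smult: "vnorm_sq (c \<cdot>\<^sub>v v) = (cmod c)^2 * vnorm_sq v"
  unfolding vnorm_sq_def by (simp add: norm_mult power_mult_distrib sum_distrib_left)

lemma vnorm_sq_eq_0D: "vnorm_sq v = 0 \<Longrightarrow> v = 0\<^sub>v (dim_vec v)"
  unfolding vnorm_sq_def by (intro eq_vecI) (simp_all add: sum_nonneg_eq_0_iff)

lemma cmod_le_vnorm_sq: "i < dim_vec v \<Longrightarrow> (cmod (v $ i))^2 \<le> vnorm_sq v"
  unfolding vnorm_sq_def by (rule member_le_sum) auto

lemma spec_norm_set_bdd_above:
  "bdd_above {vnorm2 (A *\<^sub>v v) | v. v \<in> carrier_vec (dim_col A) \<and> vnorm2 v \<le> 1}"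
proof (rule bdd_aboveI, safe)
  fix v :: "complex vec" assume v: "v \<in> carrier_vec (dim_col A)" "vnorm2 v \<le> 1"
  define r where "r i = (\<Sum>j<dim_col A. cmod (A $$ (i,j)))" for i
  have "vnorm_sq v \<le> 1"
    using v(2) unfolding vnorm2_eq_sqrt by simp
  then have "(cmod (v $ j))^2 \<le> 1" if "j < dim_col A" for j
    using cmod_le_vnorm_sq[of j v] v(1) that by simp
  then have entry: "cmod (v $ j) \<le> 1" if "j < dim_col A" for j
    using that abs_square_le_1[of "cmod (v $ j)"] by simp
  have "cmod ((A *\<^sub>v v) $ i) \<le> r i" if "i < dim_row A" for i
  proof -
    have "cmod ((A *\<^sub>v v) $ i) \<le> (\<Sum>j<dim_col A. cmod (A $$ (i,j)) * cmod (v $ j))"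
      using that v(1) by (auto simp: mult_mat_vec_def scalar_prod_def atLeast0LessThan norm_mult
          intro: order_trans[OF norm_sum])
    also have "\<dots> \<le> r i"
      unfolding r_def by (intro sum_mono mult_left_le) (auto intro: entry)
    finally show ?thesis .
  qed
  then have "vnorm_sq (A *\<^sub>v v) \<le> (\<Sum>i<dim_row A. (r i)^2)"
    unfolding vnorm_sq_def by (auto intro!: sum_mono power_mono)
  then show "vnorm2 (A *\<^sub>v v) \<le> sqrt (\<Sum>i<dim_row A. (r i)^2)"
    unfolding vnorm2_eq_sqrt by simp
qed

lemma spec_norm_upper:
  "v \<in> carrier_vec (dim_col A) \<Longrightarrow> vnorm2 v \<le> 1 \<Longrightarrow> vnorm2 (A *\<^sub>v v) \<le> spec_norm A"
  unfolding spec_norm_def by (rule cSup_upper[OF _ spec_norm_set_bdd_above]) auto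

lemma spec_norm_nonneg: "0 \<le> spec_norm A"
  using spec_norm_upper[of "0\<^sub>v (dim_col A)" A]
  by (simp add: vnorm2_eq_sqrt vnorm_sq_def mult_mat_vec_def scalar_prod_def)

lemma spec_norm_least:
  assumes "\<And>v. v \<in> carrier_vec (dim_col A) \<Longrightarrow> vnorm2 v \<le> 1 \<Longrightarrow> vnorm2 (A *\<^sub>v v) \<le> B"
  shows "spec_norm A \<le> B"
proof -
  have "vnorm2 (A *\<^sub>v 0\<^sub>v (dim_col A))
      \<in> {vnorm2 (A *\<^sub>v v) | v. v \<in> carrier_vec (dim_col A) \<and> vnorm2 v \<le> 1}"
    by (intro CollectI exI[of _ "0\<^sub>v (dim_col A)"]) (simp add: vnorm2_eq_sqrt)
  then show ?thesis
    unfolding spec_norm_def using assms by (intro cSup_least) auto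
qed

lemma vnorm_sq_mult_le_spec_norm:
  assumes v: "v \<in> carrier_vec (dim_col A)"
  shows "vnorm_sq (A *\<^sub>v v) \<le> (spec_norm A)^2 * vnorm_sq v"
proof (cases "vnorm_sq v = 0")
  case True
  then have "v = 0\<^sub>v (dim_col A)"
    using vnorm_sq_eq_0D[of v] v by auto
  then show ?thesis
    by (simp add: vnorm_sq_def mult_mat_vec_def scalar_prod_def)
next
  case False
  then have pos: "vnorm_sq v > 0"
    using vnorm_sq_nonneg[of v] by simp
  define c where "c = complex_of_real (1 / sqrt (vnorm_sq v))"
  have c: "(cmod c)^2 = 1 / vnorm_sq v"
    using pos unfolding c_def norm_of_real by (simp add: power_divide)
  have "vnorm2 (A *\<^sub>v (c \<cdot>\<^sub>v v)) \<le> spec_norm A"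
    using v c pos by (intro spec_norm_upper) (auto simp: vnorm2_eq_sqrt vnorm_sq_smult)
  moreover have "A *\<^sub>v (c \<cdot>\<^sub>v v) = c \<cdot>\<^sub>v (A *\<^sub>v v)"
    using v by (intro mult_mat_vec[of A "dim_row A" "dim_col A"]) auto
  ultimately have "sqrt ((cmod c)^2 * vnorm_sq (A *\<^sub>v v)) \<le> spec_norm A"
    by (simp add: vnorm2_eq_sqrt vnorm_sq_smult)
  then have "(cmod c)^2 * vnorm_sq (A *\<^sub>v v) \<le> (spec_norm A)^2"
    by (rule sqrt_le_D)
  then show ?thesis
    using c pos by (simp add: divide_le_eq mult.commute)
qed

lemma spec_norm_le_of_vnorm_sq_le:
  assumes "0 \<le> B"
    and "\<And>v. v \<in> carrier_vec (dim_col A) \<Longrightarrow> vnorm_sq (A *\<^sub>v v) \<le> B^2 * vnorm_sq v"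
  shows "spec_norm A \<le> B"
proof (rule spec_norm_least)
  fix v assume v: "v \<in> carrier_vec (dim_col A)" "vnorm2 v \<le> 1"
  then have "vnorm_sq v \<le> 1"
    unfolding vnorm2_eq_sqrt by simp
  then have "vnorm_sq (A *\<^sub>v v) \<le> B^2"
    using assms(2)[OF v(1)] mult_left_le[of "vnorm_sq v" "B^2"] by simp
  then show "vnorm2 (A *\<^sub>v v) \<le> B"
    unfolding vnorm2_eq_sqrt using assms(1) real_sqrt_le_mono by fastforce
qed

lemma vnorm_sq_unitary_mult:
  assumes A: "A \<in> carrier_mat n n" and unitary: "adj A * A = 1\<^sub>m n" and x: "x \<in> carrier_vec n"
  shows "vnorm_sq (A *\<^sub>v x) = vnorm_sq x"
proof -
  have as_complex: "complex_of_real (vnorm_sq v) = (\<Sum>i<dim_vec v. v $ i * cnj (v $ i))" for v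
    unfolding vnorm_sq_def of_real_sum by (intro sum.cong refl) (simp only: complex_norm_square)
  have ortho: "(\<Sum>i<n. cnj (A $$ (i,k)) * A $$ (i,j)) = (if k = j then 1 else 0)"
    if "k < n" "j < n" for k j
  proof -
    have "(adj A * A) $$ (k,j) = (\<Sum>i<n. cnj (A $$ (i,k)) * A $$ (i,j))"
      using A that unfolding adj_def by (simp add: scalar_prod_def atLeast0LessThan)
    then show ?thesis
      using unitary that by simp
  qed
  have "complex_of_real (vnorm_sq (A *\<^sub>v x)) =
      (\<Sum>i<n. (\<Sum>j<n. A $$ (i,j) * x $ j) * cnj (\<Sum>k<n. A $$ (i,k) * x $ k))"
    unfolding as_complex using A x by (simp add: mult_mat_vec_def scalar_prod_def atLeast0LessThan)
  also have "\<dots> = (\<Sum>i<n. \<Sum>j<n. \<Sum>k<n. (x $ j * cnj (x $ k)) * (cnj (A $$ (i,k)) * A $$ (i,j)))"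
    unfolding cnj_sum sum_product
    by (intro sum.cong refl) (simp add: mult.commute mult.left_commute)
  also have "\<dots> = (\<Sum>j<n. \<Sum>k<n. (x $ j * cnj (x $ k)) * (\<Sum>i<n. cnj (A $$ (i,k)) * A $$ (i,j)))"
    unfolding sum_distrib_left by (subst sum.swap) (rule sum.cong[OF refl], rule sum.swap)
  also have "\<dots> = (\<Sum>j<n. x $ j * cnj (x $ j))"
    by (simp add: ortho if_distrib cong: if_cong)
  also have "\<dots> = complex_of_real (vnorm_sq x)"
    unfolding as_complex using x by simp
  finally show ?thesis
    by (simp only: of_real_eq_iff)
qed

lemma sum_vnorm_sq_swap:
  assumes "\<And>t. t \<in> T \<Longrightarrow> z t \<in> carrier_vec q"
  shows "(\<Sum>t\<in>T. vnorm_sq (z t)) = (\<Sum>l<q. \<Sum>t\<in>T. (cmod (z t $ l))^2)"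
  using assms unfolding vnorm_sq_def by (subst sum.swap) (intro sum.cong refl, auto)

lemma mult_mat_vec_zero [simp]: "A \<in> carrier_mat n m \<Longrightarrow> A *\<^sub>v 0\<^sub>v m = 0\<^sub>v n"
  by (intro eq_vecI) auto

section \<open>Block vectors and block diagonal matrices\<close>

lemma sum_lessThan_mult_blocks:
  fixes f :: "nat \<Rightarrow> 'a::comm_monoid_add"
  shows "(\<Sum>i<a*d. f i) = (\<Sum>t<a. \<Sum>r<d. f (t*d + r))"
proof -
  have "(\<Sum>i<a*d. f i) = (\<Sum>t<a. sum f {t*d..<t*d + d})"
    using sum.nat_group[of f d a] by simp
  also have "\<dots> = (\<Sum>t<a. \<Sum>r<d. f (t*d + r))"
    using sum.shift_bounds_nat_ivl[of f 0 "_ * d" d] by (simp add: atLeast0LessThan add.commute)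
  finally show ?thesis .
qed

lemma block_index_less:
  assumes "t < a" "r < d"
  shows "t*d + r < a*(d::nat)"
proof -
  have "t*d + r < Suc t * d"
    using assms(2) by simp
  also have "\<dots> \<le> a*d"
    using assms(1) by (intro mult_le_mono1) simp
  finally show ?thesis .
qed

lemma block_index_div [simp]: "r < d \<Longrightarrow> (s*d + r) div d = (s::nat)"
  and block_index_mod [simp]: "r < d \<Longrightarrow> (s*d + r) mod d = (r::nat)"
  by (auto simp: add.commute)

definition vec_block :: "nat \<Rightarrow> 'a vec \<Rightarrow> nat \<Rightarrow> 'a vec" where
  "vec_block d v t = vec d (\<lambda>r. v $ (t*d + r))"

lemma vec_block_carrier [simp]: "vec_block d v t \<in> carrier_vec d"
  and dim_vec_block [simp]: "dim_vec (vec_block d v t) = d"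
  and index_vec_block [simp]: "r < d \<Longrightarrow> vec_block d v t $ r = v $ (t*d + r)"
  unfolding vec_block_def by simp_all

lemma vnorm_sq_vec_blocks: "dim_vec v = a*d \<Longrightarrow> vnorm_sq v = (\<Sum>t<a. vnorm_sq (vec_block d v t))"
  unfolding vnorm_sq_def by (simp add: sum_lessThan_mult_blocks)

lemma vnorm_sq_vec_blocks_le:
  assumes "v \<in> carrier_vec (k*d)" "N \<le> k"
  shows "(\<Sum>t<N. vnorm_sq (vec_block d v t)) \<le> vnorm_sq v"
proof -
  have "(\<Sum>t<N. vnorm_sq (vec_block d v t)) \<le> (\<Sum>t<k. vnorm_sq (vec_block d v t))"
    using assms(2) by (intro sum_mono2) (auto simp: vnorm_sq_nonneg)
  also have "\<dots> = vnorm_sq v"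
    using assms(1) by (simp add: vnorm_sq_vec_blocks)
  finally show ?thesis .
qed

lemma vec_block_zero: "t < k \<Longrightarrow> vec_block d (0\<^sub>v (k*d)) t = 0\<^sub>v d"
  using block_index_less[of t k] by (intro eq_vecI) auto

lemma vec_block_add:
  "a \<in> carrier_vec (k*d) \<Longrightarrow> b \<in> carrier_vec (k*d) \<Longrightarrow> t < k \<Longrightarrow>
    vec_block d (a + b) t = vec_block d a t + vec_block d b t"
  using block_index_less[of t k] by (intro eq_vecI) auto

lemma vec_block_minus:
  "a \<in> carrier_vec (k*d) \<Longrightarrow> b \<in> carrier_vec (k*d) \<Longrightarrow> t < k \<Longrightarrow>
    vec_block d (a - b) t = vec_block d a t - vec_block d b t"
  using block_index_less[of t k] by (intro eq_vecI) auto

lemma minv_eq: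
  assumes A: "A \<in> carrier_mat n n" and B: "B \<in> carrier_mat n n"
    and AB: "A * B = 1\<^sub>m n" and BA: "B * A = 1\<^sub>m n"
  shows "minv A = B"
proof -
  let ?inverse = "\<lambda>C. C \<in> carrier_mat (dim_row A) (dim_row A)
      \<and> A * C = 1\<^sub>m (dim_row A) \<and> C * A = 1\<^sub>m (dim_row A)"
  have "?inverse (minv A)"
    unfolding minv_def by (rule someI[of ?inverse B]) (use A B AB BA in simp)
  then have M: "minv A \<in> carrier_mat n n" and MA: "minv A * A = 1\<^sub>m n"
    using A by auto
  have "minv A = minv A * (A * B)"
    using M by (simp add: AB)
  also have "\<dots> = (minv A * A) * B"
    using M A B by (simp add: assoc_mult_mat)
  also have "\<dots> = B"
    using B by (simp add: MA)
  finally show ?thesis .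
qed

lemma minv_invertible:
  assumes A: "A \<in> carrier_mat n n" and "invertible_mat A"
  shows "minv A \<in> carrier_mat n n" "A * minv A = 1\<^sub>m n" "minv A * A = 1\<^sub>m n"
proof -
  obtain B where AB: "A * B = 1\<^sub>m n" and BA': "B * A = 1\<^sub>m (dim_row B)"
    using assms unfolding invertible_mat_def inverts_mat_def by auto
  have "dim_row B = n" "dim_col B = n"
    using A arg_cong[OF AB, of dim_col] arg_cong[OF BA', of dim_col] by simp_all
  then have B: "B \<in> carrier_mat n n" and BA: "B * A = 1\<^sub>m n"
    using BA' by auto
  show "minv A \<in> carrier_mat n n" "A * minv A = 1\<^sub>m n" "minv A * A = 1\<^sub>m n"
    using minv_eq[OF A B AB BA] B AB BA by simp_all
qed

lemma adj_carrier [simp]: "A \<in> carrier_mat a b \<Longrightarrow> adj A \<in> carrier_mat b a"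
  unfolding adj_def by auto

lemma adj_adj [simp]: "adj (adj A) = A"
  unfolding adj_def by (rule eq_matI) auto

lemma similar_mult_vec:
  assumes "Q \<in> carrier_mat n n" "X \<in> carrier_mat n n" "P \<in> carrier_mat n n" "v \<in> carrier_vec n"
  shows "Q *\<^sub>v (X *\<^sub>v (P *\<^sub>v v)) = (Q * X * P) *\<^sub>v v"
  using assms
  by (subst assoc_mult_mat_vec[of "Q * X" n n P n]) (auto simp: assoc_mult_mat_vec[of Q n n X n])

lemma similar_mult:
  fixes P Q X Y :: "'a::comm_ring_1 mat"
  assumes P: "P \<in> carrier_mat n n" and Q: "Q \<in> carrier_mat n n" and PQ: "P * Q = 1\<^sub>m n"
    and X: "X \<in> carrier_mat n n" and Y: "Y \<in> carrier_mat n n"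
  shows "Q * (X * Y) * P = (Q * X * P) * (Q * Y * P)"
proof -
  have "(Q * X * P) * (Q * Y * P) = (Q * X) * (P * Q) * (Y * P)"
    using P Q X Y by (simp add: assoc_mult_mat[of _ n n _ n _ n])
  also have "\<dots> = Q * (X * Y) * P"
    using P Q X Y
    by (simp add: PQ assoc_mult_mat[of _ n n _ n _ n] left_mult_one_mat[of "Y * P" n n])
  finally show ?thesis ..
qed

lemma similar_minus:
  fixes P Q X Y :: "'a::comm_ring_1 mat"
  assumes P: "P \<in> carrier_mat n n" and Q: "Q \<in> carrier_mat n n"
    and X: "X \<in> carrier_mat n n" and Y: "Y \<in> carrier_mat n n"
  shows "Q * (X - Y) * P = Q * X * P - Q * Y * P"
proof -
  have "Q * (X - Y) = Q * X - Q * Y"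
    using Q X Y by (rule mult_minus_distrib_mat)
  then show ?thesis
    using P Q X Y by (simp add: minus_mult_distrib_mat[of _ n n])
qed

lemma block_diag_carrier [simp]: "block_diag q N B \<in> carrier_mat (q*N) (q*N)"
  and dim_row_block_diag [simp]: "dim_row (block_diag q N B) = q*N"
  and dim_col_block_diag [simp]: "dim_col (block_diag q N B) = q*N"
  unfolding block_diag_def by simp_all

lemma less_mult_blockE:
  assumes "i < q*(N::nat)"
  obtains s r where "s < N" "r < q" "i = s*q + r"
proof
  have "0 < q"
    using assms by (cases q) auto
  then show "i div q < N" "i mod q < q" "i = i div q * q + i mod q"
    using assms by (auto simp: less_mult_imp_div_less mult.commute)
qed

lemma block_diag_index:
  assumes "s < N" "r < q" "s' < N" "r' < q"
  shows "block_diag q N B $$ (s*q + r, s'*q + r') = (if s = s' then B s $$ (r, r') else 0)"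
  using assms block_index_less[of s N r q] block_index_less[of s' N r' q]
  by (simp add: block_diag_def mult.commute)

lemma block_diag_mult_vec:
  assumes y: "y \<in> carrier_vec (q*N)" and n: "n < N" and B: "B n \<in> carrier_mat q q"
  shows "vec_block q (block_diag q N B *\<^sub>v y) n = B n *\<^sub>v vec_block q y n"
proof (rule eq_vecI)
  fix k assume "k < dim_vec (B n *\<^sub>v vec_block q y n)"
  then have k: "k < q"
    using B by simp
  have idx: "s*q + r < q*N" if "s < N" "r < q" for s r
    using block_index_less[OF that] by (simp add: mult.commute)
  have "vec_block q (block_diag q N B *\<^sub>v y) n $ k
      = (\<Sum>s<N. \<Sum>r<q. block_diag q N B $$ (n*q + k, s*q + r) * y $ (s*q + r))"
    using k n y idx[OF n k]
    by (simp add: mult_mat_vec_def scalar_prod_def atLeast0LessThan mult.commute[of q N]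
        sum_lessThan_mult_blocks)
      (auto intro!: sum.cong simp: idx mult.commute[of N q])
  also have "\<dots> = (\<Sum>s<N. if s = n then \<Sum>r<q. B n $$ (k, r) * y $ (n*q + r) else 0)"
    using k n by (intro sum.cong refl) (auto simp: block_diag_index)
  also have "\<dots> = (B n *\<^sub>v vec_block q y n) $ k"
    using k n B by (simp add: mult_mat_vec_def scalar_prod_def atLeast0LessThan)
  finally show "vec_block q (block_diag q N B *\<^sub>v y) n $ k = (B n *\<^sub>v vec_block q y n) $ k" .
qed (use B in simp)

lemma block_diag_mult:
  assumes "\<And>n. n < N \<Longrightarrow> B n \<in> carrier_mat q q" "\<And>n. n < N \<Longrightarrow> C n \<in> carrier_mat q q"
  shows "block_diag q N B * block_diag q N C = block_diag q N (\<lambda>n. B n * C n)"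
proof (rule eq_matI)
  fix i j assume "i < dim_row (block_diag q N (\<lambda>n. B n * C n))"
    "j < dim_col (block_diag q N (\<lambda>n. B n * C n))"
  then obtain s r s' r' where ij: "s < N" "r < q" "i = s*q + r" "s' < N" "r' < q" "j = s'*q + r'"
    by (auto elim!: less_mult_blockE)
  have "(block_diag q N B * block_diag q N C) $$ (i,j)
      = (\<Sum>t<N. \<Sum>u<q. block_diag q N B $$ (i, t*q + u) * block_diag q N C $$ (t*q + u, j))"
    using ij block_index_less[of s N r q] block_index_less[of s' N r' q]
    by (simp add: scalar_prod_def atLeast0LessThan mult.commute[of q N] sum_lessThan_mult_blocks)
  also have "\<dots> = (\<Sum>t<N. if t = s then
      (if s = s' then \<Sum>u<q. B s $$ (r, u) * C s $$ (u, r') else 0) else 0)"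
    using ij by (intro sum.cong refl) (auto simp: block_diag_index)
  also have "\<dots> = block_diag q N (\<lambda>n. B n * C n) $$ (i,j)"
    using ij assms(1)[OF ij(4)] assms(2)[OF ij(4)]
    by (simp add: block_diag_index scalar_prod_def atLeast0LessThan)
  finally show "(block_diag q N B * block_diag q N C) $$ (i,j)
      = block_diag q N (\<lambda>n. B n * C n) $$ (i,j)" .
qed simp_all

lemma block_diag_minus:
  assumes "\<And>n. n < N \<Longrightarrow> B n \<in> carrier_mat q q" "\<And>n. n < N \<Longrightarrow> C n \<in> carrier_mat q q"
  shows "block_diag q N B - block_diag q N C = block_diag q N (\<lambda>n. B n - C n)"
proof (rule eq_matI)
  fix i j assume "i < dim_row (block_diag q N (\<lambda>n. B n - C n))"
    "j < dim_col (block_diag q N (\<lambda>n. B n - C n))"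
  then obtain s r s' r' where ij: "s < N" "r < q" "i = s*q + r" "s' < N" "r' < q" "j = s'*q + r'"
    by (auto elim!: less_mult_blockE)
  then show "(block_diag q N B - block_diag q N C) $$ (i,j)
      = block_diag q N (\<lambda>n. B n - C n) $$ (i,j)"
    using assms(1)[OF ij(1)] assms(2)[OF ij(1)]
      block_index_less[of s N r q] block_index_less[of s' N r' q]
    by (auto simp: block_diag_index mult.commute[of N q])
qed simp_all

lemma block_diag_one: "block_diag q N (\<lambda>n. 1\<^sub>m q) = 1\<^sub>m (q*N)"
proof (rule eq_matI)
  fix i j assume "i < dim_row (1\<^sub>m (q*N))" "j < dim_col (1\<^sub>m (q*N))"
  then obtain s r s' r' where ij: "s < N" "r < q" "i = s*q + r" "s' < N" "r' < q" "j = s'*q + r'"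
    by (auto elim!: less_mult_blockE)
  moreover have "(a*q + b) div q = a \<and> (a*q + b) mod q = b" if "b < q" for a b
    using that by (auto simp: add.commute)
  then have "s*q + r = s'*q + r' \<longleftrightarrow> s = s' \<and> r = r'"
    using ij by metis
  ultimately show "block_diag q N (\<lambda>n. 1\<^sub>m q) $$ (i,j) = 1\<^sub>m (q*N) $$ (i,j)"
    using block_index_less[of s N r q] block_index_less[of s' N r' q]
    by (simp add: block_diag_index mult.commute[of N q])
qed simp_all

section \<open>Linear recursions with diagonalisable coefficients\<close>

lemma weighted_cauchy_schwarz:
  fixes w b :: "'a \<Rightarrow> real"
  assumes w: "\<And>i. i \<in> I \<Longrightarrow> 0 \<le> w i"
  shows "(\<Sum>i\<in>I. w i * b i)^2 \<le> (\<Sum>i\<in>I. w i) * (\<Sum>i\<in>I. w i * (b i)^2)"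
proof -
  have "0 \<le> (\<Sum>i\<in>I. \<Sum>j\<in>I. w i * w j * (b i - b j)^2)"
    using w by (auto intro!: sum_nonneg)
  also have "\<dots> = (\<Sum>i\<in>I. \<Sum>j\<in>I.
      w i * b i ^ 2 * w j + w i * (w j * b j ^ 2) - 2 * (w i * b i * (w j * b j)))"
    by (intro sum.cong refl) (simp add: power2_eq_square algebra_simps)
  also have "\<dots> = (\<Sum>i\<in>I. w i * b i ^ 2) * (\<Sum>j\<in>I. w j) + (\<Sum>i\<in>I. w i) * (\<Sum>j\<in>I. w j * b j ^ 2)
      - 2 * ((\<Sum>i\<in>I. w i * b i) * (\<Sum>j\<in>I. w j * b j))"
    unfolding sum_product by (simp add: sum_subtractf sum.distrib sum_distrib_left)
  finally show ?thesis
    by (simp add: power2_eq_square mult.commute)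
qed

lemma scalar_recursion_closed_form:
  fixes z \<xi> :: "nat \<Rightarrow> complex"
  assumes z0: "z 0 = 0" and z_Suc: "\<And>t. t < N \<Longrightarrow> z (Suc t) = \<mu> * z t + h * \<xi> t"
  shows "t \<le> N \<Longrightarrow> z t = (\<Sum>s<t. \<mu> ^ (t - Suc s) * h * \<xi> s)"
proof (induction t)
  case 0
  then show ?case
    using z0 by simp
next
  case (Suc t)
  then have "z (Suc t) = \<mu> * (\<Sum>s<t. \<mu> ^ (t - Suc s) * h * \<xi> s) + h * \<xi> t"
    using z_Suc by simp
  also have "\<dots> = (\<Sum>s<t. \<mu> ^ (Suc t - Suc s) * h * \<xi> s) + h * \<xi> t"
  proof -
    have "\<mu> * \<mu> ^ (t - Suc s) = \<mu> ^ (Suc t - Suc s)" if "s < t" for s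
      using that by (simp flip: power_Suc add: Suc_diff_Suc)
    then show ?thesis
      by (simp add: sum_distrib_left mult.assoc[symmetric])
  qed
  finally show ?case
    by simp
qed

lemma sum_shifted_le:
  fixes a :: "nat \<Rightarrow> real"
  assumes a: "\<And>k. 0 \<le> a k" and s: "s < N"
  shows "(\<Sum>t\<le>N. if s < t then a (t - Suc s) else 0) \<le> (\<Sum>k<N. a k)"
proof -
  have "{t\<in>{..N}. s < t} = {0 + Suc s..<(N - s) + Suc s}"
    using s by auto
  then have "(\<Sum>t\<le>N. if s < t then a (t - Suc s) else 0)
      = (\<Sum>t\<in>{0 + Suc s..<(N - s) + Suc s}. a (t - Suc s))"
    by (simp flip: sum.inter_filter del: add_Suc_right)
  also have "\<dots> = (\<Sum>k\<in>{0..<N - s}. a k)"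
    by (subst sum.shift_bounds_nat_ivl) simp
  also have "\<dots> \<le> (\<Sum>k<N. a k)"
    using a by (intro sum_mono2) auto
  finally show ?thesis .
qed

lemma young_causal_convolution:
  fixes a b c :: "nat \<Rightarrow> real"
  assumes a: "\<And>k. 0 \<le> a k" and c: "\<And>t. t \<le> N \<Longrightarrow> \<bar>c t\<bar> \<le> (\<Sum>s<t. a (t - Suc s) * b s)"
  shows "(\<Sum>t\<le>N. (c t)^2) \<le> (\<Sum>k<N. a k)^2 * (\<Sum>t<N. (b t)^2)"
proof -
  define A where "A = (\<Sum>k<N. a k)"
  have A: "0 \<le> A"
    unfolding A_def using a by (simp add: sum_nonneg)
  have pointwise: "(c t)^2 \<le> A * (\<Sum>s<N. if s < t then a (t - Suc s) * (b s)^2 else 0)"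
    if t: "t \<le> N" for t
  proof -
    have "(c t)^2 \<le> (\<Sum>s<t. a (t - Suc s) * b s)^2"
      using c[OF t] by (metis abs_ge_zero order_trans power2_abs power_mono)
    also have "\<dots> \<le> (\<Sum>s<t. a (t - Suc s)) * (\<Sum>s<t. a (t - Suc s) * (b s)^2)"
      using a by (intro weighted_cauchy_schwarz)
    also have "(\<Sum>s<t. a (t - Suc s)) \<le> A"
      unfolding A_def sum.nat_diff_reindex using a t by (intro sum_mono2) auto
    also have "(\<Sum>s<t. a (t - Suc s) * (b s)^2)
        = (\<Sum>s<N. if s < t then a (t - Suc s) * (b s)^2 else 0)"
      using t by (simp flip: sum.inter_filter) (metis (no_types, lifting) Collect_cong
          lessThan_def less_le_trans)
    finally show ?thesis
      using A a by (simp add: mult_right_mono sum_nonneg)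
  qed
  have "(\<Sum>t\<le>N. (c t)^2) \<le> (\<Sum>t\<le>N. A * (\<Sum>s<N. if s < t then a (t - Suc s) * (b s)^2 else 0))"
    using pointwise by (intro sum_mono) auto
  also have "\<dots> = A * (\<Sum>s<N. (b s)^2 * (\<Sum>t\<le>N. if s < t then a (t - Suc s) else 0))"
    by (simp add: sum_distrib_left[symmetric] sum.swap[of _ "{..N}"] sum_distrib_left if_distrib
        mult.commute cong: if_cong)
  also have "\<dots> \<le> A * (\<Sum>s<N. (b s)^2 * A)"
    using A a unfolding A_def by (intro mult_left_mono sum_mono mult_left_mono sum_shifted_le) auto
  also have "\<dots> = A^2 * (\<Sum>t<N. (b t)^2)"
    by (simp add: sum_distrib_left power2_eq_square mult_ac)
  finally show ?thesis
    unfolding A_def .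
qed

lemma energy_bound_scalar:
  fixes z \<xi> :: "nat \<Rightarrow> complex"
  assumes z0: "z 0 = 0" and z_Suc: "\<And>t. t < N \<Longrightarrow> z (Suc t) = \<mu> * z t + h * \<xi> t"
  shows "(\<Sum>t\<le>N. (cmod (z t))^2) \<le> (cmod h * (\<Sum>k<N. cmod \<mu> ^ k))^2 * (\<Sum>t<N. (cmod (\<xi> t))^2)"
proof -
  have "\<bar>cmod (z t)\<bar> \<le> (\<Sum>s<t. cmod h * cmod \<mu> ^ (t - Suc s) * cmod (\<xi> s))" if "t \<le> N" for t
  proof -
    have "\<bar>cmod (z t)\<bar> = cmod (\<Sum>s<t. \<mu> ^ (t - Suc s) * h * \<xi> s)"
      using scalar_recursion_closed_form[OF z0 z_Suc that] by simp
    also have "\<dots> \<le> (\<Sum>s<t. cmod h * cmod \<mu> ^ (t - Suc s) * cmod (\<xi> s))"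
      by (rule order_trans[OF norm_sum]) (simp add: norm_mult norm_power mult_ac)
    finally show ?thesis .
  qed
  then show ?thesis
    using young_causal_convolution[of "\<lambda>k. cmod h * cmod \<mu> ^ k" N "\<lambda>t. cmod (z t)" "\<lambda>s. cmod (\<xi> s)"]
    by (simp add: sum_distrib_left)
qed

lemma dim_row_mat_diag [simp]: "dim_row (mat_diag q f) = q"
  and dim_col_mat_diag [simp]: "dim_col (mat_diag q f) = q"
  unfolding mat_diag_def by simp_all

lemma mat_diag_mult_vec_index: "v \<in> carrier_vec q \<Longrightarrow> l < q \<Longrightarrow> (mat_diag q f *\<^sub>v v) $ l = f l * v $ l"
  unfolding mat_diag_def mult_mat_vec_def scalar_prod_def by (subst sum.remove[of _ l]) auto

lemma energy_bound_diagonal: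
  fixes \<mu> h :: "nat \<Rightarrow> complex" and z \<xi> :: "nat \<Rightarrow> complex vec"
  assumes z: "\<And>t. z t \<in> carrier_vec q" and \<xi>: "\<And>t. \<xi> t \<in> carrier_vec q" and z0: "z 0 = 0\<^sub>v q"
    and z_Suc: "\<And>t l. t < N \<Longrightarrow> l < q \<Longrightarrow> z (Suc t) $ l = \<mu> l * z t $ l + h l * \<xi> t $ l"
  shows "(\<Sum>t\<le>N. vnorm_sq (z t))
    \<le> (Max ((\<lambda>l. cmod (h l) * (\<Sum>k<N. cmod (\<mu> l) ^ k)) ` {..<q}))^2 * (\<Sum>t<N. vnorm_sq (\<xi> t))"
proof -
  define M where "M = Max ((\<lambda>l. cmod (h l) * (\<Sum>k<N. cmod (\<mu> l) ^ k)) ` {..<q})"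
  have "(\<Sum>t\<le>N. (cmod (z t $ l))^2) \<le> M^2 * (\<Sum>t<N. (cmod (\<xi> t $ l))^2)" if l: "l < q" for l
  proof -
    have "(\<Sum>t\<le>N. (cmod (z t $ l))^2)
        \<le> (cmod (h l) * (\<Sum>k<N. cmod (\<mu> l)^k))^2 * (\<Sum>t<N. (cmod (\<xi> t $ l))^2)"
      using l z0 z_Suc by (intro energy_bound_scalar) simp_all
    also have "\<dots> \<le> M^2 * (\<Sum>t<N. (cmod (\<xi> t $ l))^2)"
      unfolding M_def using l by (intro mult_right_mono power_mono Max_ge) (auto simp: sum_nonneg)
    finally show ?thesis .
  qed
  then have "(\<Sum>l<q. \<Sum>t\<le>N. (cmod (z t $ l))^2) \<le> (\<Sum>l<q. M^2 * (\<Sum>t<N. (cmod (\<xi> t $ l))^2))"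
    by (intro sum_mono) auto
  then show ?thesis
    unfolding M_def[symmetric] using z \<xi> by (simp add: sum_vnorm_sq_swap[of _ _ q] sum_distrib_left)
qed

lemma energy_bound_diagonalisable:
  fixes P H U Ui :: "complex mat" and \<mu> h :: "nat \<Rightarrow> complex" and y x :: "nat \<Rightarrow> complex vec"
  assumes U: "U \<in> carrier_mat q q" and Ui: "Ui \<in> carrier_mat q q" and U_Ui: "U * Ui = 1\<^sub>m q"
    and P: "P \<in> carrier_mat q q" and H: "H \<in> carrier_mat q q"
    and P_diag: "Ui * P * U = mat_diag q \<mu>" and H_diag: "Ui * H * U = mat_diag q h"
    and y: "\<And>t. y t \<in> carrier_vec q" and x: "\<And>t. x t \<in> carrier_vec q"
    and y0: "y 0 = 0\<^sub>v q" and y_Suc: "\<And>t. t < N \<Longrightarrow> y (Suc t) = P *\<^sub>v y t + H *\<^sub>v x t"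
  shows "(\<Sum>t\<le>N. vnorm_sq (y t)) \<le> (spec_norm U * spec_norm Ui
      * Max ((\<lambda>l. cmod (h l) * (\<Sum>k<N. cmod (\<mu> l) ^ k)) ` {..<q}))^2 * (\<Sum>t<N. vnorm_sq (x t))"
proof -
  define M where "M = Max ((\<lambda>l. cmod (h l) * (\<Sum>k<N. cmod (\<mu> l) ^ k)) ` {..<q})"
  define z where "z t = Ui *\<^sub>v y t" for t
  define \<xi> where "\<xi> t = Ui *\<^sub>v x t" for t
  have z: "z t \<in> carrier_vec q" and \<xi>: "\<xi> t \<in> carrier_vec q" for t
    unfolding z_def \<xi>_def using Ui x y by auto
  have U_inverse: "U *\<^sub>v (Ui *\<^sub>v v) = v" if "v \<in> carrier_vec q" for v
    using that U Ui by (simp add: U_Ui flip: assoc_mult_mat_vec)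
  have "z (Suc t) $ l = \<mu> l * z t $ l + h l * \<xi> t $ l" if "t < N" "l < q" for t l
  proof -
    have "z (Suc t) = Ui *\<^sub>v (P *\<^sub>v (U *\<^sub>v z t)) + Ui *\<^sub>v (H *\<^sub>v (U *\<^sub>v \<xi> t))"
      unfolding z_def \<xi>_def using y_Suc[OF that(1)] U_inverse x y Ui P H
      by (simp add: mult_add_distrib_mat_vec)
    then show ?thesis
      using that z \<xi> P H U Ui
      by (simp add: similar_mult_vec P_diag H_diag mat_diag_mult_vec_index del: index_mult_mat_vec)
  qed
  then have z_energy: "(\<Sum>t\<le>N. vnorm_sq (z t)) \<le> M^2 * (\<Sum>t<N. vnorm_sq (\<xi> t))"
    unfolding M_def using z \<xi> by (intro energy_bound_diagonal) (simp_all add: z_def y0 Ui)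
  have "y t = U *\<^sub>v z t" for t
    unfolding z_def using U_inverse y by simp
  then have "(\<Sum>t\<le>N. vnorm_sq (y t)) \<le> (spec_norm U)^2 * (\<Sum>t\<le>N. vnorm_sq (z t))"
    using U z vnorm_sq_mult_le_spec_norm[of "z _" U] by (simp add: sum_distrib_left sum_mono)
  also have "\<dots> \<le> (spec_norm U)^2 * (M^2 * (\<Sum>t<N. vnorm_sq (\<xi> t)))"
    using z_energy by (intro mult_left_mono) simp_all
  also have "\<dots> \<le> (spec_norm U)^2 * (M^2 * ((spec_norm Ui)^2 * (\<Sum>t<N. vnorm_sq (x t))))"
    using Ui x vnorm_sq_mult_le_spec_norm[of "x _" Ui]
    by (intro mult_left_mono) (simp_all add: \<xi>_def sum_distrib_left sum_mono)
  finally show ?thesis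
    unfolding M_def by (simp add: power_mult_distrib mult_ac)
qed

section \<open>Block bidiagonal time-stepping matrices\<close>

lemma block_bidiag_carrier [simp]:
  "G \<in> carrier_mat d d \<Longrightarrow> block_bidiag NT G \<in> carrier_mat ((NT+1)*d) ((NT+1)*d)"
  unfolding block_bidiag_def Let_def by simp

lemma dim_row_block_bidiag [simp]: "dim_row (block_bidiag NT G) = (NT+1) * dim_row G"
  and dim_col_block_bidiag [simp]: "dim_col (block_bidiag NT G) = (NT+1) * dim_row G"
  unfolding block_bidiag_def Let_def by simp_all

lemma block_bidiag_index:
  assumes G: "G \<in> carrier_mat d d" and "s \<le> NT" "r < d" "s' \<le> NT" "r' < d"
  shows "block_bidiag NT G $$ (s*d + r, s'*d + r') =
    (if s = s' then (if r = r' then 1 else 0) else if s = Suc s' then - G $$ (r, r') else 0)"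
  using assms block_index_less[of s "NT+1" r d] block_index_less[of s' "NT+1" r' d]
  by (simp add: block_bidiag_def Let_def add.assoc)

lemma block_bidiag_mult_vec:
  assumes G: "G \<in> carrier_mat d d" and v: "v \<in> carrier_vec ((NT+1)*d)" and t: "t \<le> NT"
  shows "vec_block d (block_bidiag NT G *\<^sub>v v) t =
    (if t = 0 then vec_block d v 0 else vec_block d v t - G *\<^sub>v vec_block d v (t - 1))"
    (is "?lhs = ?rhs")
proof (rule eq_vecI)
  fix r assume "r < dim_vec ?rhs"
  then have r: "r < d"
    using G by (simp split: if_splits)
  have idx: "s*d + r' < (NT+1)*d" if "s < NT+1" "r' < d" for s r'
    using block_index_less[OF that] .
  have "?lhs $ r = (\<Sum>j<(NT+1)*d. block_bidiag NT G $$ (t*d + r, j) * v $ j)"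
    using G v r t idx[of t r] by (simp add: scalar_prod_def atLeast0LessThan)
  also have "\<dots> = (\<Sum>s<NT+1. \<Sum>r'<d. block_bidiag NT G $$ (t*d + r, s*d + r') * v $ (s*d + r'))"
    by (rule sum_lessThan_mult_blocks)
  also have "\<dots> = (\<Sum>s<NT+1. (if s = t then v $ (t*d + r) else 0)
      - (if Suc s = t then \<Sum>r'<d. G $$ (r, r') * v $ (s*d + r') else 0))"
    using G r t by (intro sum.cong refl)
      (auto simp: block_bidiag_index sum_negf if_distrib[of "\<lambda>x. x * _"] cong: if_cong)
  also have "\<dots> = ?rhs $ r"
    using G r t
    by (cases t) (auto simp: sum_subtractf mult_mat_vec_def scalar_prod_def atLeast0LessThan)
  finally show "?lhs $ r = ?rhs $ r" .
qed (use G in simp)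

lemma block_bidiag_inverse:
  assumes G: "G \<in> carrier_mat d d"
  shows "minv (block_bidiag NT G) \<in> carrier_mat ((NT+1)*d) ((NT+1)*d)"
    and "block_bidiag NT G * minv (block_bidiag NT G) = 1\<^sub>m ((NT+1)*d)"
proof -
  let ?n = "(NT+1)*d" and ?A = "block_bidiag NT G"
  have A: "?A \<in> carrier_mat ?n ?n"
    by (rule block_bidiag_carrier[OF G])
  have upper_zero: "?A $$ (i,j) = 0" if "i < j" "j < ?n" for i j
  proof -
    have "i < d*(NT+1)" "j < d*(NT+1)"
      using that by (simp_all add: mult.commute)
    then obtain s r s' r'
      where ij: "s < NT+1" "r < d" "i = s*d + r" "s' < NT+1" "r' < d" "j = s'*d + r'"
      by (elim less_mult_blockE)
    have "i div d \<le> j div d"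
      using that(1) by (simp add: div_le_mono)
    then have "s \<le> s'"
      using ij by simp
    then show ?thesis
      using ij that(1) G by (auto simp: block_bidiag_index)
  qed
  have "det ?A = prod_list (diag_mat ?A)"
    using A upper_zero by (intro det_lower_triangular) auto
  also have "diag_mat ?A = map (\<lambda>i. 1) [0..<?n]"
    unfolding diag_mat_def using A by (intro map_cong)
      (auto simp: block_bidiag_def Let_def carrier_matD[OF G])
  finally have "det ?A \<noteq> 0"
    by (simp add: map_replicate_const)
  then obtain B where B: "B \<in> carrier_mat ?n ?n" "?A * B = 1\<^sub>m ?n" "B * ?A = 1\<^sub>m ?n"
    using det_non_zero_imp_unit[OF A] unfolding Units_def ring_mat_def by auto
  then show "minv ?A \<in> carrier_mat ?n ?n" "?A * minv ?A = 1\<^sub>m ?n"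
    using minv_eq[OF A B] by simp_all
qed

lemma coarse_error_recursion:
  assumes G: "G \<in> carrier_mat d d" and K: "K \<in> carrier_mat d d" and v: "v \<in> carrier_vec ((NT+1)*d)"
  defines "e \<equiv> (1\<^sub>m ((NT+1)*d) - minv (block_bidiag NT G) * block_bidiag NT K) *\<^sub>v v"
  shows "vec_block d e 0 = 0\<^sub>v d"
    and "t < NT \<Longrightarrow> vec_block d e (Suc t) = G *\<^sub>v vec_block d e t + (K - G) *\<^sub>v vec_block d v t"
proof -
  let ?n = "(NT+1)*d" and ?Ac = "block_bidiag NT G" and ?AS = "block_bidiag NT K"
  have Ac: "?Ac \<in> carrier_mat ?n ?n" and AS: "?AS \<in> carrier_mat ?n ?n"
    by (rule block_bidiag_carrier[OF G], rule block_bidiag_carrier[OF K])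
  note inv = block_bidiag_inverse[OF G, of NT]
  have e_eq: "e = v - minv ?Ac *\<^sub>v (?AS *\<^sub>v v)"
    unfolding e_def minus_mult_distrib_mat_vec[OF one_carrier_mat mult_carrier_mat[OF inv(1) AS] v]
      assoc_mult_mat_vec[OF inv(1) AS v]
    using v by simp
  have e: "e \<in> carrier_vec ?n"
    unfolding e_eq using v AS inv(1) by simp
  have Ac_e: "?Ac *\<^sub>v e = ?Ac *\<^sub>v v - ?AS *\<^sub>v v"
    unfolding e_eq using v Ac AS inv
    by (simp add: mult_minus_distrib_mat_vec assoc_mult_mat_vec[of ?Ac ?n ?n _ ?n, symmetric])
  have blocks: "vec_block d (?Ac *\<^sub>v e) s = vec_block d (?Ac *\<^sub>v v) s - vec_block d (?AS *\<^sub>v v) s"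
    if "s \<le> NT" for s
    unfolding Ac_e using that Ac AS v by (intro vec_block_minus[of _ "NT+1"]) auto
  show "vec_block d e 0 = 0\<^sub>v d"
    using blocks[of 0] G K e v by (simp add: block_bidiag_mult_vec)
  assume t: "t < NT"
  from blocks[of "Suc t"] t G K e v
  have shifted: "vec_block d e (Suc t) - G *\<^sub>v vec_block d e t
      = (vec_block d v (Suc t) - G *\<^sub>v vec_block d v t)
        - (vec_block d v (Suc t) - K *\<^sub>v vec_block d v t)"
    by (simp add: block_bidiag_mult_vec)
  show "vec_block d e (Suc t) = G *\<^sub>v vec_block d e t + (K - G) *\<^sub>v vec_block d v t"
  proof (rule eq_vecI)
    fix r assume "r < dim_vec (G *\<^sub>v vec_block d e t + (K - G) *\<^sub>v vec_block d v t)"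
    then have r: "r < d"
      using G by simp
    then show "vec_block d e (Suc t) $ r = (G *\<^sub>v vec_block d e t + (K - G) *\<^sub>v vec_block d v t) $ r"
      using arg_cong[OF shifted, of "\<lambda>u. u $ r"] G K
      by (simp add: minus_mult_distrib_mat_vec[of K d d G] del: index_mult_mat_vec)
        (simp add: diff_eq_eq add.commute)
  qed (use G in simp)
qed

lemma relaxation_shift:
  assumes K: "K \<in> carrier_mat d d" and v: "v \<in> carrier_vec ((NT+1)*d)"
  defines "u \<equiv> (1\<^sub>m ((NT+1)*d) - block_bidiag NT K) *\<^sub>v v"
  shows "vec_block d u 0 = 0\<^sub>v d"
    and "t < NT \<Longrightarrow> vec_block d u (Suc t) = K *\<^sub>v vec_block d v t"
proof -
  let ?n = "(NT+1)*d" and ?AS = "block_bidiag NT K"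
  have AS: "?AS \<in> carrier_mat ?n ?n"
    by (rule block_bidiag_carrier[OF K])
  have blocks: "vec_block d u s = vec_block d v s - vec_block d (?AS *\<^sub>v v) s" if "s \<le> NT" for s
  proof -
    have "u = v - ?AS *\<^sub>v v"
      unfolding u_def minus_mult_distrib_mat_vec[OF one_carrier_mat AS v] using v by simp
    then show ?thesis
      using that v AS by (simp only:) (rule vec_block_minus[of _ "NT+1"], auto)
  qed
  show "vec_block d u 0 = 0\<^sub>v d"
    using blocks[of 0] K v by (simp add: block_bidiag_mult_vec)
  show "vec_block d u (Suc t) = K *\<^sub>v vec_block d v t" if "t < NT"
    using blocks[of "Suc t"] that K v by (intro eq_vecI) (auto simp: block_bidiag_mult_vec)
qed

lemma coarse_FCF_error_recursion:
  assumes G: "G \<in> carrier_mat d d" and K: "K \<in> carrier_mat d d" and v: "v \<in> carrier_vec ((NT+1)*d)"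
  defines "e \<equiv> ((1\<^sub>m ((NT+1)*d) - minv (block_bidiag NT G) * block_bidiag NT K)
    * (1\<^sub>m ((NT+1)*d) - block_bidiag NT K)) *\<^sub>v v"
  shows "vec_block d e 0 = 0\<^sub>v d"
    and "1 \<le> NT \<Longrightarrow> vec_block d e (Suc 0) = 0\<^sub>v d"
    and "Suc t < NT \<Longrightarrow>
      vec_block d e (Suc (Suc t)) = G *\<^sub>v vec_block d e (Suc t) + ((K - G) * K) *\<^sub>v vec_block d v t"
    and "dim_vec e = Suc NT * d"
proof -
  let ?E = "1\<^sub>m ((NT+1)*d) - minv (block_bidiag NT G) * block_bidiag NT K"
    and ?S = "1\<^sub>m ((NT+1)*d) - block_bidiag NT K"
  have E: "?E \<in> carrier_mat ((NT+1)*d) ((NT+1)*d)" and S: "?S \<in> carrier_mat ((NT+1)*d) ((NT+1)*d)"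
    by (rule minus_carrier_mat[OF mult_carrier_mat[OF block_bidiag_inverse(1)[OF G]
          block_bidiag_carrier[OF K]]], rule minus_carrier_mat[OF block_bidiag_carrier[OF K]])
  define u where "u = ?S *\<^sub>v v"
  have u: "u \<in> carrier_vec ((NT+1)*d)"
    unfolding u_def using S v by simp
  have e_u: "e = ?E *\<^sub>v u"
    unfolding e_def u_def using assoc_mult_mat_vec[OF E S v] .
  note relax = relaxation_shift[OF K v, folded u_def]
  note recursion = coarse_error_recursion[OF G K u, folded e_u]
  \<comment> \<open>The input \<open>u\<close> lags \<open>v\<close> by one step, so the recursion starts one step late,
    driven by \<open>(K - G) K v\<close>.\<close>
  show "vec_block d e 0 = 0\<^sub>v d"
    by (rule recursion(1))
  show "vec_block d e (Suc 0) = 0\<^sub>v d" if "1 \<le> NT"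
    using recursion relax that mult_mat_vec_zero[OF G]
      mult_mat_vec_zero[OF minus_carrier_mat[OF G, of K]]
    by simp
  show "vec_block d e (Suc (Suc t)) = G *\<^sub>v vec_block d e (Suc t) + ((K - G) * K) *\<^sub>v vec_block d v t"
    if "Suc t < NT"
    using recursion(2)[of "Suc t"] relax(2)[of t] that
      assoc_mult_mat_vec[OF minus_carrier_mat[OF G, of K] K vec_block_carrier]
    by simp
  show "dim_vec e = Suc NT * d"
    unfolding e_u using carrier_matD(1)[OF E] by (simp del: index_minus_mat)
qed

section \<open>Simultaneous two-level diagonalisation\<close>

locale two_level_diagonalisation =
  fixes q Nx :: nat and F :: "complex mat" and U Ui :: "nat \<Rightarrow> complex mat"
  assumes q_pos: "0 < q" and Nx_pos: "0 < Nx"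
    and F_carrier: "F \<in> carrier_mat (q*Nx) (q*Nx)"
    and F_unitary: "F * adj F = 1\<^sub>m (q*Nx)" "adj F * F = 1\<^sub>m (q*Nx)"
    and U_carrier: "\<And>n. n < Nx \<Longrightarrow> U n \<in> carrier_mat q q"
    and Ui_carrier: "\<And>n. n < Nx \<Longrightarrow> Ui n \<in> carrier_mat q q"
    and U_inverse: "\<And>n. n < Nx \<Longrightarrow> U n * Ui n = 1\<^sub>m q" "\<And>n. n < Nx \<Longrightarrow> Ui n * U n = 1\<^sub>m q"
begin

definition diagonalised :: "complex mat \<Rightarrow> (nat \<Rightarrow> nat \<Rightarrow> complex) \<Rightarrow> bool" where
  "diagonalised X f \<longleftrightarrow> X \<in> carrier_mat (q*Nx) (q*Nx) \<and>
    (\<exists>B. adj F * X * F = block_diag q Nx B \<and>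
      (\<forall>n<Nx. B n \<in> carrier_mat q q \<and> Ui n * B n * U n = mat_diag q (f n)))"

lemma diagonalised_one: "diagonalised (1\<^sub>m (q*Nx)) (\<lambda>n l. 1)"
  unfolding diagonalised_def
proof (intro conjI exI[of _ "\<lambda>n. 1\<^sub>m q"] allI impI)
  show "adj F * 1\<^sub>m (q*Nx) * F = block_diag q Nx (\<lambda>n. 1\<^sub>m q)"
    by (simp add: right_mult_one_mat[OF adj_carrier[OF F_carrier]] F_unitary block_diag_one)
  fix n assume "n < Nx"
  then show "Ui n * 1\<^sub>m q * U n = mat_diag q (\<lambda>l. 1)"
    using right_mult_one_mat[OF Ui_carrier] U_inverse by simp
qed simp_all

lemma diagonalised_mult:
  assumes "diagonalised X f" "diagonalised Y g"
  shows "diagonalised (X * Y) (\<lambda>n l. f n l * g n l)"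
proof -
  obtain B C where X: "X \<in> carrier_mat (q*Nx) (q*Nx)" and XB: "adj F * X * F = block_diag q Nx B"
    and B: "\<And>n. n < Nx \<Longrightarrow> B n \<in> carrier_mat q q \<and> Ui n * B n * U n = mat_diag q (f n)"
    and Y: "Y \<in> carrier_mat (q*Nx) (q*Nx)" and YC: "adj F * Y * F = block_diag q Nx C"
    and C: "\<And>n. n < Nx \<Longrightarrow> C n \<in> carrier_mat q q \<and> Ui n * C n * U n = mat_diag q (g n)"
    using assms unfolding diagonalised_def by blast
  have "adj F * (X * Y) * F = block_diag q Nx (\<lambda>n. B n * C n)"
    using similar_mult[OF F_carrier adj_carrier[OF F_carrier] F_unitary(1) X Y] B C
    by (simp add: XB YC block_diag_mult)
  moreover have "Ui n * (B n * C n) * U n = mat_diag q (\<lambda>l. f n l * g n l)" if "n < Nx" for n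
    using similar_mult[OF U_carrier[OF that] Ui_carrier[OF that] U_inverse(1)[OF that], of "B n" "C n"]
      B C that
    by simp
  ultimately show ?thesis
    unfolding diagonalised_def using X Y B C
    by (intro conjI exI[of _ "\<lambda>n. B n * C n"]) (auto intro: mult_carrier_mat)
qed

lemma diagonalised_minus:
  assumes "diagonalised X f" "diagonalised Y g"
  shows "diagonalised (X - Y) (\<lambda>n l. f n l - g n l)"
proof -
  obtain B C where X: "X \<in> carrier_mat (q*Nx) (q*Nx)" and XB: "adj F * X * F = block_diag q Nx B"
    and B: "\<And>n. n < Nx \<Longrightarrow> B n \<in> carrier_mat q q \<and> Ui n * B n * U n = mat_diag q (f n)"
    and Y: "Y \<in> carrier_mat (q*Nx) (q*Nx)" and YC: "adj F * Y * F = block_diag q Nx C"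
    and C: "\<And>n. n < Nx \<Longrightarrow> C n \<in> carrier_mat q q \<and> Ui n * C n * U n = mat_diag q (g n)"
    using assms unfolding diagonalised_def by blast
  have "adj F * (X - Y) * F = block_diag q Nx (\<lambda>n. B n - C n)"
    using similar_minus[OF F_carrier adj_carrier[OF F_carrier] X Y] B C
    by (simp add: XB YC block_diag_minus)
  moreover have "Ui n * (B n - C n) * U n = mat_diag q (\<lambda>l. f n l - g n l)" if "n < Nx" for n
    using similar_minus[OF U_carrier[OF that] Ui_carrier[OF that], of "B n" "C n"] B C that
    by (auto simp: mat_diag_def)
  ultimately show ?thesis
    unfolding diagonalised_def using X Y B C
    by (intro conjI exI[of _ "\<lambda>n. B n - C n"]) (auto intro: minus_carrier_mat)
qed

lemma diagonalised_pow:
  assumes "diagonalised X f"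
  shows "diagonalised (X ^\<^sub>m k) (\<lambda>n l. f n l ^ k)"
proof (induction k)
  case 0
  have "X ^\<^sub>m 0 = 1\<^sub>m (q*Nx)"
    using assms unfolding diagonalised_def by auto
  then show ?case
    using diagonalised_one by simp
next
  case (Suc k)
  then show ?case
    using diagonalised_mult[OF Suc assms] by (simp add: mult.commute)
qed

text \<open>The sum \<open>\<Sum>k<N. \<bar>\<mu>\<bar>^k\<close> replaces the paper's \<open>(1 - \<bar>\<mu>\<bar>^N) / (1 - \<bar>\<mu>\<bar>)\<close>, which it equals
  whenever \<open>\<bar>\<mu>\<bar> \<noteq> 1\<close>.\<close>

definition amplification ::
  "(nat \<Rightarrow> nat \<Rightarrow> complex) \<Rightarrow> (nat \<Rightarrow> nat \<Rightarrow> complex) \<Rightarrow> nat \<Rightarrow> real" where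
  "amplification h \<mu> N = Max ((\<lambda>n. spec_norm (U n) * spec_norm (Ui n)
      * Max ((\<lambda>l. cmod (h n l) * (\<Sum>k<N. cmod (\<mu> n l) ^ k)) ` {..<q})) ` {..<Nx})"

lemma amplification_ge:
  "n < Nx \<Longrightarrow> spec_norm (U n) * spec_norm (Ui n)
    * Max ((\<lambda>l. cmod (h n l) * (\<Sum>k<N. cmod (\<mu> n l) ^ k)) ` {..<q}) \<le> amplification h \<mu> N"
  unfolding amplification_def by (intro Max_ge) auto

lemma block_amplification_nonneg:
  "0 \<le> spec_norm (U n) * spec_norm (Ui n)
    * Max ((\<lambda>l. cmod (h n l) * (\<Sum>k<N. cmod (\<mu> n l) ^ k)) ` {..<q})"
proof -
  have "0 \<le> cmod (h n 0) * (\<Sum>k<N. cmod (\<mu> n 0) ^ k)"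
    by (simp add: sum_nonneg)
  also have "\<dots> \<le> Max ((\<lambda>l. cmod (h n l) * (\<Sum>k<N. cmod (\<mu> n l) ^ k)) ` {..<q})"
    using q_pos by (intro Max_ge) auto
  finally show ?thesis
    by (simp add: spec_norm_nonneg)
qed

lemma amplification_nonneg: "0 \<le> amplification h \<mu> N"
  using block_amplification_nonneg amplification_ge[OF Nx_pos] by (rule order_trans)

lemma amplification_geometric:
  assumes "\<And>n l. n < Nx \<Longrightarrow> l < q \<Longrightarrow> cmod (\<mu> n l) \<noteq> 1"
  shows "amplification h \<mu> N = Max ((\<lambda>n. spec_norm (U n) * spec_norm (Ui n)
      * Max ((\<lambda>l. cmod (h n l) * (1 - cmod (\<mu> n l) ^ N) / (1 - cmod (\<mu> n l))) ` {..<q})) ` {..<Nx})"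
  unfolding amplification_def using assms
  by (intro arg_cong[where f = Max] image_cong refl arg_cong2[where f = "(*)"])
    (simp add: sum_gp_strict)

lemma energy_bound_block:
  fixes y x :: "nat \<Rightarrow> complex vec"
  assumes n: "n < Nx" and P: "P \<in> carrier_mat q q" "Ui n * P * U n = mat_diag q (\<mu> n)"
    and B: "B \<in> carrier_mat q q" "Ui n * B * U n = mat_diag q (h n)"
    and y: "\<And>t. y t \<in> carrier_vec q" and x: "\<And>t. x t \<in> carrier_vec q"
    and y0: "y 0 = 0\<^sub>v q" and y_Suc: "\<And>t. t < N \<Longrightarrow> y (Suc t) = P *\<^sub>v y t + B *\<^sub>v x t"
  shows "(\<Sum>t\<le>N. vnorm_sq (y t)) \<le> (amplification h \<mu> N)^2 * (\<Sum>t<N. vnorm_sq (x t))"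
proof -
  have "(\<Sum>t\<le>N. vnorm_sq (y t)) \<le> (spec_norm (U n) * spec_norm (Ui n)
      * Max ((\<lambda>l. cmod (h n l) * (\<Sum>k<N. cmod (\<mu> n l) ^ k)) ` {..<q}))^2 * (\<Sum>t<N. vnorm_sq (x t))"
    by (rule energy_bound_diagonalisable[OF U_carrier[OF n] Ui_carrier[OF n] U_inverse(1)[OF n]
          P(1) B(1) P(2) B(2) y x y0 y_Suc])
  also have "\<dots> \<le> (amplification h \<mu> N)^2 * (\<Sum>t<N. vnorm_sq (x t))"
    using amplification_ge[OF n] block_amplification_nonneg
    by (intro mult_right_mono power_mono) (auto simp: sum_nonneg vnorm_sq_nonneg)
  finally show ?thesis .
qed

lemma F_adj_mult_vec: "v \<in> carrier_vec (q*Nx) \<Longrightarrow> F *\<^sub>v (adj F *\<^sub>v v) = v"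
  using assoc_mult_mat_vec[OF F_carrier adj_carrier[OF F_carrier]] by (simp add: F_unitary)

lemma vnorm_sq_adj_F_blocks:
  assumes v: "v \<in> carrier_vec (q*Nx)"
  shows "vnorm_sq v = (\<Sum>n<Nx. vnorm_sq (vec_block q (adj F *\<^sub>v v) n))"
proof -
  have "vnorm_sq v = vnorm_sq (adj F *\<^sub>v v)"
    using vnorm_sq_unitary_mult[OF adj_carrier[OF F_carrier] _ v] F_unitary(1) by simp
  also have "\<dots> = (\<Sum>n<Nx. vnorm_sq (vec_block q (adj F *\<^sub>v v) n))"
    using carrier_matD(1)[OF adj_carrier[OF F_carrier]]
    by (simp add: vnorm_sq_vec_blocks mult.commute[of q Nx])
  finally show ?thesis .
qed

lemma adj_F_mult_vec_block:
  assumes X: "X \<in> carrier_mat (q*Nx) (q*Nx)" and XB: "adj F * X * F = block_diag q Nx B"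
    and n: "n < Nx" and B: "B n \<in> carrier_mat q q" and v: "v \<in> carrier_vec (q*Nx)"
  shows "vec_block q (adj F *\<^sub>v (X *\<^sub>v v)) n = B n *\<^sub>v vec_block q (adj F *\<^sub>v v) n"
proof -
  have Fv: "adj F *\<^sub>v v \<in> carrier_vec (q*Nx)"
    using mult_mat_vec_carrier[OF adj_carrier[OF F_carrier] v] .
  have "adj F *\<^sub>v (X *\<^sub>v v) = adj F *\<^sub>v (X *\<^sub>v (F *\<^sub>v (adj F *\<^sub>v v)))"
    using v by (simp add: F_adj_mult_vec)
  also have "\<dots> = block_diag q Nx B *\<^sub>v (adj F *\<^sub>v v)"
    using similar_mult_vec[OF adj_carrier[OF F_carrier] X F_carrier Fv] by (simp add: XB)
  finally show ?thesis
    using block_diag_mult_vec[of "adj F *\<^sub>v v" q Nx n B] Fv n B by simp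
qed

lemma energy_bound:
  assumes G: "diagonalised G \<mu>" and H: "diagonalised H h"
    and w: "\<And>t. w t \<in> carrier_vec (q*Nx)" and x: "\<And>t. x t \<in> carrier_vec (q*Nx)"
    and w0: "w 0 = 0\<^sub>v (q*Nx)" and w_Suc: "\<And>t. t < N \<Longrightarrow> w (Suc t) = G *\<^sub>v w t + H *\<^sub>v x t"
  shows "(\<Sum>t\<le>N. vnorm_sq (w t)) \<le> (amplification h \<mu> N)^2 * (\<Sum>t<N. vnorm_sq (x t))"
proof -
  obtain P B
    where G_carrier: "G \<in> carrier_mat (q*Nx) (q*Nx)" and GP: "adj F * G * F = block_diag q Nx P"
    and P: "\<And>n. n < Nx \<Longrightarrow> P n \<in> carrier_mat q q \<and> Ui n * P n * U n = mat_diag q (\<mu> n)"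
    and H_carrier: "H \<in> carrier_mat (q*Nx) (q*Nx)" and HB: "adj F * H * F = block_diag q Nx B"
    and B: "\<And>n. n < Nx \<Longrightarrow> B n \<in> carrier_mat q q \<and> Ui n * B n * U n = mat_diag q (h n)"
    using G H unfolding diagonalised_def by blast
  note F' = adj_carrier[OF F_carrier]
  \<comment> \<open>In the coordinates \<open>F\<^sup>* w\<close> the recursion decouples into \<open>Nx\<close> recursions of size \<open>q\<close>.\<close>
  define y where "y n t = vec_block q (adj F *\<^sub>v w t) n" for n t
  define \<xi> where "\<xi> n t = vec_block q (adj F *\<^sub>v x t) n" for n t
  have y_Suc: "y n (Suc t) = P n *\<^sub>v y n t + B n *\<^sub>v \<xi> n t" if n: "n < Nx" and t: "t < N" for n t
  proof -
    have "adj F *\<^sub>v w (Suc t) = adj F *\<^sub>v (G *\<^sub>v w t) + adj F *\<^sub>v (H *\<^sub>v x t)"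
      using w_Suc[OF t] G_carrier H_carrier w x by (simp add: mult_add_distrib_mat_vec[OF F'])
    moreover have "adj F *\<^sub>v (G *\<^sub>v w t) \<in> carrier_vec (Nx*q)"
      and "adj F *\<^sub>v (H *\<^sub>v x t) \<in> carrier_vec (Nx*q)"
      using mult_mat_vec_carrier[OF F' mult_mat_vec_carrier[OF G_carrier w]]
        mult_mat_vec_carrier[OF F' mult_mat_vec_carrier[OF H_carrier x]]
      by (simp_all only: mult.commute[of q Nx])
    ultimately show ?thesis
      unfolding y_def \<xi>_def using n P[OF n] B[OF n] w x G_carrier H_carrier
      by (simp add: vec_block_add adj_F_mult_vec_block GP HB)
  qed
  have per_block: "(\<Sum>t\<le>N. vnorm_sq (y n t)) \<le> (amplification h \<mu> N)^2 * (\<Sum>t<N. vnorm_sq (\<xi> n t))"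
    if n: "n < Nx" for n
    using n P[OF n] B[OF n] y_Suc[OF n] w0 F'
    by (intro energy_bound_block)
      (auto simp: y_def \<xi>_def vec_block_zero[OF n] mult.commute[of q Nx])
  have "(\<Sum>t\<le>N. vnorm_sq (w t)) = (\<Sum>n<Nx. \<Sum>t\<le>N. vnorm_sq (y n t))"
    unfolding y_def vnorm_sq_adj_F_blocks[OF w] by (rule sum.swap)
  also have "\<dots> \<le> (\<Sum>n<Nx. (amplification h \<mu> N)^2 * (\<Sum>t<N. vnorm_sq (\<xi> n t)))"
    using per_block by (intro sum_mono) simp
  also have "\<dots> = (amplification h \<mu> N)^2 * (\<Sum>t<N. vnorm_sq (x t))"
    unfolding \<xi>_def vnorm_sq_adj_F_blocks[OF x] sum_distrib_left[symmetric]
    by (simp only: sum.swap[of _ "{..<Nx}" "{..<N}"])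
  finally show ?thesis .
qed

lemma spec_norm_coarse_F_le:
  assumes G: "diagonalised G \<mu>" and K: "K \<in> carrier_mat (q*Nx) (q*Nx)"
    and KG: "diagonalised (K - G) h"
  shows "spec_norm (1\<^sub>m ((NT+1)*(q*Nx)) - minv (block_bidiag NT G) * block_bidiag NT K)
    \<le> amplification h \<mu> NT"
proof (rule spec_norm_le_of_vnorm_sq_le[OF amplification_nonneg])
  let ?D = "q*Nx" and ?E = "1\<^sub>m ((NT+1)*(q*Nx)) - minv (block_bidiag NT G) * block_bidiag NT K"
  have G_carrier: "G \<in> carrier_mat ?D ?D"
    using G unfolding diagonalised_def by blast
  fix v :: "complex vec" assume "v \<in> carrier_vec (dim_col ?E)"
  then have v: "v \<in> carrier_vec ((NT+1)*?D)"
    using K by simp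
  define e where "e = ?E *\<^sub>v v"
  note recursion = coarse_error_recursion[OF G_carrier K v, folded e_def]
  have "vnorm_sq e = (\<Sum>t\<le>NT. vnorm_sq (vec_block ?D e t))"
    using vnorm_sq_vec_blocks[of e "NT+1" ?D]
      carrier_matD(1)[OF block_bidiag_inverse(1)[OF G_carrier]]
    by (simp add: e_def lessThan_Suc_atMost)
  also have "\<dots> \<le> (amplification h \<mu> NT)^2 * (\<Sum>t<NT. vnorm_sq (vec_block ?D v t))"
    by (rule energy_bound[OF G KG]) (simp_all add: recursion)
  also have "\<dots> \<le> (amplification h \<mu> NT)^2 * vnorm_sq v"
    using vnorm_sq_vec_blocks_le[OF v, of NT] by (intro mult_left_mono) auto
  finally show "vnorm_sq (?E *\<^sub>v v) \<le> (amplification h \<mu> NT)^2 * vnorm_sq v"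
    unfolding e_def .
qed

lemma spec_norm_coarse_FCF_le:
  assumes NT: "1 \<le> NT" and G: "diagonalised G \<mu>" and K: "K \<in> carrier_mat (q*Nx) (q*Nx)"
    and KGK: "diagonalised ((K - G) * K) h"
  shows "spec_norm ((1\<^sub>m ((NT+1)*(q*Nx)) - minv (block_bidiag NT G) * block_bidiag NT K)
      * (1\<^sub>m ((NT+1)*(q*Nx)) - block_bidiag NT K)) \<le> amplification h \<mu> (NT - 1)"
proof (rule spec_norm_le_of_vnorm_sq_le[OF amplification_nonneg])
  let ?D = "q*Nx" and ?ES = "(1\<^sub>m ((NT+1)*(q*Nx)) - minv (block_bidiag NT G) * block_bidiag NT K)
      * (1\<^sub>m ((NT+1)*(q*Nx)) - block_bidiag NT K)"
  have G_carrier: "G \<in> carrier_mat ?D ?D"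
    using G unfolding diagonalised_def by blast
  fix v :: "complex vec" assume "v \<in> carrier_vec (dim_col ?ES)"
  then have v: "v \<in> carrier_vec ((NT+1)*?D)"
    using K by simp
  define e where "e = ?ES *\<^sub>v v"
  note recursion = coarse_FCF_error_recursion[OF G_carrier K v, folded e_def]
  have "vnorm_sq e = (\<Sum>t<Suc NT. vnorm_sq (vec_block ?D e t))"
    using recursion(4) by (rule vnorm_sq_vec_blocks)
  also have "\<dots> = vnorm_sq (vec_block ?D e 0) + (\<Sum>t<NT. vnorm_sq (vec_block ?D e (Suc t)))"
    by (rule sum.lessThan_Suc_shift)
  also have "\<dots> = (\<Sum>t\<le>NT - 1. vnorm_sq (vec_block ?D e (Suc t)))"
    using NT recursion(1) by (simp add: lessThan_Suc_atMost[symmetric])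
  also have "\<dots> \<le> (amplification h \<mu> (NT - 1))^2 * (\<Sum>t<NT - 1. vnorm_sq (vec_block ?D v t))"
    using NT by (intro energy_bound[OF G KGK]) (simp_all add: recursion(2,3))
  also have "\<dots> \<le> (amplification h \<mu> (NT - 1))^2 * vnorm_sq v"
    using vnorm_sq_vec_blocks_le[OF v, of "NT - 1"] by (intro mult_left_mono) auto
  finally show "vnorm_sq (?ES *\<^sub>v v) \<le> (amplification h \<mu> (NT - 1))^2 * vnorm_sq v"
    unfolding e_def .
qed

end

theorem mainTheorem1:
  fixes q Nx NT m :: nat
    and Phi Phic F :: "complex mat"
    and Phit Phict U :: "nat \<Rightarrow> complex mat"
    and lam mu :: "nat \<Rightarrow> nat \<Rightarrow> complex"
  assumes "q \<ge> 1" "Nx \<ge> 1" "NT \<ge> 1" "m \<ge> 1"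
    and "Phi \<in> carrier_mat (q*Nx) (q*Nx)" "Phic \<in> carrier_mat (q*Nx) (q*Nx)"
    and "F \<in> carrier_mat (q*Nx) (q*Nx)"
    and "F * adj F = 1\<^sub>m (q*Nx)" "adj F * F = 1\<^sub>m (q*Nx)"
    and "\<forall>n<Nx. Phit n \<in> carrier_mat q q \<and> Phict n \<in> carrier_mat q q"
    and "minv F * Phi * F = block_diag q Nx Phit"
    and "minv F * Phic * F = block_diag q Nx Phict"
    and "\<forall>n<Nx. U n \<in> carrier_mat q q \<and> invertible_mat (U n)"
    and "\<forall>n<Nx. minv (U n) * Phit n * U n = mat_diag q (lam n)"
    and "\<forall>n<Nx. minv (U n) * Phict n * U n = mat_diag q (mu n)"
    and "\<forall>n<Nx. \<forall>l<q. cmod (mu n l) \<noteq> 1"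
  shows
    "spec_norm (1\<^sub>m ((NT+1)*(q*Nx)) - minv (block_bidiag NT Phic) * block_bidiag NT (Phi ^\<^sub>m m))
       \<le> Max ((\<lambda>n. kappa (U n) * Max ((\<lambda>l. cmod (lam n l ^ m - mu n l)
             * (1 - cmod (mu n l) ^ NT) / (1 - cmod (mu n l))) ` {..<q})) ` {..<Nx})
     \<and>
     spec_norm ((1\<^sub>m ((NT+1)*(q*Nx)) - minv (block_bidiag NT Phic) * block_bidiag NT (Phi ^\<^sub>m m))
                * (1\<^sub>m ((NT+1)*(q*Nx)) - block_bidiag NT (Phi ^\<^sub>m m)))
       \<le> Max ((\<lambda>n. kappa (U n) * Max ((\<lambda>l. cmod (lam n l ^ m - mu n l) * cmod (lam n l) ^ m
             * (1 - cmod (mu n l) ^ (NT - 1)) / (1 - cmod (mu n l))) ` {..<q})) ` {..<Nx})"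
proof -
  have Ui: "minv (U n) \<in> carrier_mat q q" "U n * minv (U n) = 1\<^sub>m q" "minv (U n) * U n = 1\<^sub>m q"
    if "n < Nx" for n
    using minv_invertible assms(13) that by auto
  interpret two_level_diagonalisation q Nx F U "\<lambda>n. minv (U n)"
    using assms(1,2,7-9,13) Ui by unfold_locales auto
  have "minv F = adj F"
    using minv_eq[OF assms(7) adj_carrier[OF assms(7)] assms(8,9)] .
  then have Phi: "diagonalised Phi lam" and Phic: "diagonalised Phic mu"
    unfolding diagonalised_def using assms(5,6,10-12,14,15) by auto
  have Phi_m: "diagonalised (Phi ^\<^sub>m m) (\<lambda>n l. lam n l ^ m)"
    by (rule diagonalised_pow[OF Phi])
  have defect: "diagonalised (Phi ^\<^sub>m m - Phic) (\<lambda>n l. lam n l ^ m - mu n l)"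
    by (rule diagonalised_minus[OF Phi_m Phic])
  have Phi_m_carrier: "Phi ^\<^sub>m m \<in> carrier_mat (q*Nx) (q*Nx)"
    using assms(5) by simp
  note F_bound = spec_norm_coarse_F_le[OF Phic Phi_m_carrier defect, of NT]
  note FCF_bound =
    spec_norm_coarse_FCF_le[OF assms(3) Phic Phi_m_carrier diagonalised_mult[OF defect Phi_m]]
  show ?thesis
    using F_bound FCF_bound assms(16)
    by (simp add: amplification_geometric kappa_def norm_mult norm_power mult.assoc)
qed

end
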